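(* Let $V$ be a finite set. Let $\mathcal{Q}:=\{\hat X\in\mathbb{S}^{\{0\}\cup V}_+ : \hat X_{00}=1,\ \hat X_{ii}=\hat X_{0i}\ \forall i\in V\}$, $\mathcal{Q}':=\{\hat X\in\mathcal{Q} : \hat X[V]\ge 0 \text{ entrywise}\}$, and $\mathcal{Q}'':=\{\hat X\in\mathcal{Q} : (e_0-e_i)^{\mathsf T}\hat X(e_0-e_j)\ge 0\ \forall ij\in\binom{V}{2}\}$. Let $\hat{\mathcal{C}}\in\{\mathcal{Q},\mathcal{Q}',\mathcal{Q}''\}$. Then a point $\hat X$ of $\hat{\mathcal{C}}$ is a vertex of $\hat{\mathcal{C}}$ if and only if $\operatorname{rank}(\hat X)=1$. Thus the vertices of $\hat{\mathcal{C}}$ are precisely the matrices $(1\oplus\chi^S)(1\oplus\chi^S)^{\mathsf T}$ with $S\subseteq V$.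
   Context: $0$ is a new index not in $V$; $\mathbb{S}^{W}_+$ denotes real symmetric positive semidefinite matrices indexed by $W$, with trace inner product; $e_i$ are standard basis vectors of $\mathbb{R}^{\{0\}\cup V}$; $\hat X[V]$ is the principal submatrix indexed by $V$. $\chi^S$ is the incidence vector of $S$ and $1\oplus\chi^S\in\mathbb{R}^{\{0\}\cup V}$ has $0$-entry $1$. For a convex set $\mathcal{C}$ in a finite-dimensional space $\mathbb{E}$ and $\bar x\in\mathcal{C}$, the normal cone is $N_{\mathcal{C}}(\bar x):=\{c : \langle c,x\rangle\le\langle c,\bar x\rangle\ \forall x\in\mathcal{C}\}$; $\bar x$ is a vertex if $\dim N_{\mathcal{C}}(\bar x)=\dim\mathbb{E}$. *)

theory Defs
  imports "HOL-Analysis.Analysis"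
begin

text \<open>Matrices indexed by the finite type 'n = {0} \<union> V, where the distinguished
  index z plays the role of 0 and V = UNIV - {z}.\<close>

definition sym_mats :: "(real^'n^'n) set" where
  "sym_mats = {X. transpose X = X}"

definition psd :: "real^'n^'n \<Rightarrow> bool" where
  "psd X \<longleftrightarrow> transpose X = X \<and> (\<forall>x. 0 \<le> x \<bullet> (X *v x))"

definition QQ :: "'n \<Rightarrow> (real^'n^'n) set" where
  "QQ z = {X. psd X \<and> X $ z $ z = 1 \<and> (\<forall>i. i \<noteq> z \<longrightarrow> X $ i $ i = X $ z $ i)}"

definition QQ' :: "'n \<Rightarrow> (real^'n^'n) set" where
  "QQ' z = {X \<in> QQ z. \<forall>i j. i \<noteq> z \<longrightarrow> j \<noteq> z \<longrightarrow> 0 \<le> X $ i $ j}"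

definition QQ'' :: "'n \<Rightarrow> (real^'n^'n) set" where
  "QQ'' z = {X \<in> QQ z. \<forall>i j. i \<noteq> z \<longrightarrow> j \<noteq> z \<longrightarrow> i \<noteq> j \<longrightarrow>
       0 \<le> (axis z 1 - axis i 1) \<bullet> (X *v (axis z 1 - axis j 1))}"

text \<open>Normal cone of C at x inside the ambient space E (trace inner product =
  Frobenius inner product on real^'n^'n).\<close>
definition normal_cone :: "'a::real_inner set \<Rightarrow> 'a set \<Rightarrow> 'a \<Rightarrow> 'a set" where
  "normal_cone E C x = {c \<in> E. \<forall>y\<in>C. c \<bullet> y \<le> c \<bullet> x}"

definition is_vertex :: "'a::euclidean_space set \<Rightarrow> 'a set \<Rightarrow> 'a \<Rightarrow> bool" where
  "is_vertex E C x \<longleftrightarrow> x \<in> C \<and> dim (normal_cone E C x) = dim E"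

definition lift_chi :: "'n \<Rightarrow> 'n set \<Rightarrow> real^'n" where
  "lift_chi z S = (\<chi> i. if i = z \<or> i \<in> S then 1 else 0)"

definition outer :: "real^'n \<Rightarrow> real^'n^'n" where
  "outer v = (\<chi> i j. v $ i * v $ j)"

end

theory Submission
  imports Defs
begin

(* The index z plays the role of 0.  The rank-one points of Q are the matrices v v^T with
   v = 1 \<oplus> \<chi>^S, because X_ii = X_zi forces v_i^2 = v_i.  Such a point is a vertex: the normal
   cone of Q at X contains the normals of the equality constraints of Q and every -w w^T with w
   orthogonal to v, and these already span the symmetric matrices; as Q' and Q'' are subsets of
   Q containing X, their normal cones at X are even larger.
   Conversely, if rank X \<noteq> 1 there is c with (X c)_z = 0 but X c \<noteq> 0.  Congruence of X by
   I + t K, where K maps e_z to c and every other e_j to a multiple of itself, gives after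
   normalising the (z,z)-entry an arc through X inside Q (inside Q' for small t) whose tangent at
   X is a nonzero symmetric matrix D.  Every normal vector at X is orthogonal to D, so the normal
   cone is not full-dimensional.  The case Q'' reduces to Q' by the linear involution
   e_j \<mapsto> e_z - e_j. *)

lemma inner_axis_matrix_axis: "axis i 1 \<bullet> ((A::real^'n^'m) *v axis j 1) = A $ i $ j"
  by (simp add: inner_axis' matrix_vector_mult_basis column_def)

lemma matrix_vector_axis_nth: "((A::real^'n^'m) *v axis j 1) $ i = A $ i $ j"
  by (simp add: matrix_vector_mult_basis column_def)

lemma axis_one_nth: "axis i (1::real) $ a = of_bool (a = i)"
  by (simp add: axis_def)

lemma matrix_eq_if_columns_eq:
  "(\<And>k. (A::real^'n^'m) *v axis k 1 = B *v axis k 1) \<Longrightarrow> A = B"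
  by (simp add: vec_eq_iff) (metis matrix_vector_axis_nth)

lemma symmetric_matrix_nth: "transpose (A::'a^'n^'n) = A \<Longrightarrow> A $ i $ j = A $ j $ i"
  by (metis transpose_def vec_lambda_beta)

lemma transpose_add: "transpose ((A::'a::semiring_1^'n^'m) + B) = transpose A + transpose B"
  by (simp add: transpose_def vec_eq_iff)

lemma linear_transpose: "linear (transpose :: 'a::real_algebra_1^'n^'m \<Rightarrow> 'a^'m^'n)"
  by (simp add: linear_iff transpose_def vec_eq_iff algebra_simps)

lemma matrix_add_rdistrib: "((A::'a::semiring_1^'n^'m) + B) ** C = A ** C + B ** C"
  by (vector matrix_matrix_mult_def sum.distrib[symmetric] field_simps)

lemma inner_transpose_matrix_vector: "x \<bullet> (transpose M *v y) = (M *v x) \<bullet> (y::real^'n)"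
  by (metis inner_commute dot_lmul_matrix transpose_matrix_vector)

lemma symmetric_inner_matrix_commute:
  "transpose A = A \<Longrightarrow> x \<bullet> ((A::real^'n^'n) *v y) = y \<bullet> (A *v x)"
  by (metis inner_commute inner_transpose_matrix_vector)

lemma inner_congruence:
  "x \<bullet> ((transpose M ** A ** M) *v y) = (M *v x) \<bullet> ((A::real^'n^'n) *v (M *v y))"
  by (simp only: matrix_vector_mul_assoc[symmetric] inner_transpose_matrix_vector)

lemma congruence_nth:
  "(transpose M ** A ** M) $ i $ j = (M *v axis i 1) \<bullet> ((A::real^'n^'n) *v (M *v axis j 1))"
  by (metis inner_axis_matrix_axis inner_congruence)

lemma congruence_identity_plus:
  fixes K X :: "real^'n^'n"
  shows "transpose (mat 1 + t *\<^sub>R K) ** X ** (mat 1 + t *\<^sub>R K)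
    = X + t *\<^sub>R (transpose K ** X + X ** K) + t\<^sup>2 *\<^sub>R (transpose K ** X ** K)"
  by (simp add: transpose_add transpose_scalar matrix_add_ldistrib matrix_add_rdistrib
      matrix_scalar_ac scalar_matrix_assoc[symmetric] power2_eq_square algebra_simps)

lemma psd_congruence: "psd A \<Longrightarrow> psd (transpose M ** A ** M)"
  unfolding psd_def by (simp add: inner_congruence matrix_transpose_mul matrix_mul_assoc)

lemma psd_scaleR: "psd A \<Longrightarrow> 0 \<le> r \<Longrightarrow> psd (r *\<^sub>R (A::real^'n^'n))"
  unfolding psd_def by (simp add: transpose_scalar scaleR_matrix_vector_assoc[symmetric])

lemma psd_diag_eq_0_imp_row_eq_0:
  assumes "psd (X::real^'n^'n)" "X $ j $ j = 0"
  shows "X $ j $ k = 0"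
proof (rule ccontr)
  assume ne: "X $ j $ k \<noteq> 0"
  have "X $ k $ j = X $ j $ k"
    using assms(1) symmetric_matrix_nth unfolding psd_def by metis
  define s where "s = - (X $ k $ k + 1) / (2 * X $ j $ k)"
  define x where "x = axis k 1 + s *\<^sub>R axis j (1::real)"
  have "0 \<le> x \<bullet> (X *v x)" using assms(1) unfolding psd_def by auto
  also have "x \<bullet> (X *v x) = X $ k $ k + s * X $ k $ j + s * X $ j $ k + s * s * X $ j $ j"
    unfolding x_def by (simp add: algebra_simps inner_axis_matrix_axis)
  also have "\<dots> = -1"
    using ne assms(2) \<open>X $ k $ j = X $ j $ k\<close> unfolding s_def by (simp add: field_simps)
  finally show False by simp
qed

lemma matrix_vector_eq_scaleR_column_if_kernel:
  fixes X :: "real^'n^'n"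
  assumes "X $ z $ z \<noteq> 0" and kernel: "\<forall>c. (X *v c) $ z = 0 \<longrightarrow> X *v c = 0"
  shows "X *v c = ((X *v c) $ z / X $ z $ z) *\<^sub>R (X *v axis z 1)"
proof -
  define r where "r = (X *v c) $ z / X $ z $ z"
  have "(X *v (c - r *\<^sub>R axis z 1)) $ z = 0"
    using assms(1)
    by (simp add: r_def matrix_vector_mult_diff_distrib matrix_vector_mult_scaleR matrix_vector_axis_nth)
  then have "X *v (c - r *\<^sub>R axis z 1) = 0" using kernel by blast
  then show ?thesis by (simp add: r_def matrix_vector_mult_diff_distrib matrix_vector_mult_scaleR)
qed

lemma rank_eq_1_iff_kernel:
  fixes X :: "real^'n^'n"
  assumes "X $ z $ z \<noteq> 0"
  shows "rank X = 1 \<longleftrightarrow> (\<forall>c. (X *v c) $ z = 0 \<longrightarrow> X *v c = 0)"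
proof -
  define v where "v = X *v axis z 1"
  have "v $ z \<noteq> 0" using assms by (simp add: v_def matrix_vector_axis_nth)
  then have dim_v: "dim {v} = 1" by (subst dim_insert) auto
  have v_range: "v \<in> range ((*v) X)" by (simp add: v_def)
  show ?thesis
  proof
    assume "rank X = 1"
    then have "span {v} = span (range ((*v) X))"
      using v_range dim_v
      by (intro subspace_dim_equal) (auto simp: rank_dim_range span_mono)
    then have "X *v c \<in> span {v}" for c by (simp add: span_base)
    then have "\<exists>k. X *v c = k *\<^sub>R v" for c by (metis imageE span_singleton)
    then show "\<forall>c. (X *v c) $ z = 0 \<longrightarrow> X *v c = 0"
      using \<open>v $ z \<noteq> 0\<close> by (metis scaleR_eq_0_iff vector_scaleR_component)
  next
    assume "\<forall>c. (X *v c) $ z = 0 \<longrightarrow> X *v c = 0"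
    then have "X *v c \<in> span {v}" for c
      using matrix_vector_eq_scaleR_column_if_kernel[OF assms]
      by (metis v_def span_base span_scale singletonI)
    then have "span (range ((*v) X)) = span {v}"
      using v_range by (auto simp: span_eq span_base)
    then show "rank X = 1"
      by (metis dim_v dim_span rank_dim_range)
  qed
qed

section \<open>Rank-one points of Q\<close>

lemma QQ_D:
  assumes "X \<in> QQ z"
  shows "psd X" "X $ z $ z = 1" "\<And>i. i \<noteq> z \<Longrightarrow> X $ i $ i = X $ z $ i"
    and "\<And>i j. X $ i $ j = X $ j $ i"
proof -
  show "psd X" "X $ z $ z = 1" "\<And>i. i \<noteq> z \<Longrightarrow> X $ i $ i = X $ z $ i"
    using assms by (simp_all add: QQ_def)
  then show "\<And>i j. X $ i $ j = X $ j $ i"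
    using symmetric_matrix_nth unfolding psd_def by blast
qed

lemma outer_mult_vector: "outer v *v x = (v \<bullet> x) *\<^sub>R v"
  by (simp add: vec_eq_iff matrix_vector_mult_def outer_def inner_vec_def sum_distrib_left
      sum_distrib_right ac_simps)

lemma inner_outer: "outer w \<bullet> (Y::real^'n^'n) = w \<bullet> (Y *v w)"
  by (simp add: inner_vec_def matrix_vector_mult_def outer_def sum_distrib_left ac_simps)

lemma transpose_outer: "transpose (outer v) = outer v"
  by (simp add: vec_eq_iff transpose_def outer_def mult.commute)

lemma psd_outer: "psd (outer v)"
  by (simp add: psd_def transpose_outer outer_mult_vector inner_commute)

lemma lift_chi_nth_z: "lift_chi z S $ z = 1"
  by (simp add: lift_chi_def)

lemma outer_lift_chi_in_QQ: "outer (lift_chi z S) \<in> QQ z"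
  unfolding QQ_def using psd_outer[of "lift_chi z S"] by (simp add: outer_def lift_chi_def)

lemma outer_lift_chi_in_QQ': "outer (lift_chi z S) \<in> QQ' z"
  using outer_lift_chi_in_QQ by (simp add: QQ'_def outer_def lift_chi_def)

lemma outer_lift_chi_in_QQ'': "outer (lift_chi z S) \<in> QQ'' z"
  using outer_lift_chi_in_QQ
  by (simp add: QQ''_def outer_mult_vector inner_diff_left inner_diff_right inner_axis
      inner_axis' lift_chi_def)

lemma QQ_eq_outer_lift_chi_if_kernel:
  assumes X: "X \<in> QQ z" and kernel: "\<forall>c. (X *v c) $ z = 0 \<longrightarrow> X *v c = 0"
  shows "\<exists>S \<subseteq> UNIV - {z}. X = outer (lift_chi z S)"
proof -
  note X_facts = QQ_D[OF X]
  have col: "X *v c = (X *v c) $ z *\<^sub>R (X *v axis z 1)" for c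
    by (rule matrix_vector_eq_scaleR_column_if_kernel[OF _ kernel, unfolded X_facts(2) div_by_1])
      simp
  have rank_one_nth: "X $ i $ k = X $ z $ i * X $ z $ k" for i k
    using col[of "axis k 1", THEN arg_cong[where f="\<lambda>x. x $ i"]] X_facts(4)[of i z]
    by (simp add: matrix_vector_axis_nth mult.commute)
  define S where "S = {i. i \<noteq> z \<and> X $ z $ i = 1}"
  have lift: "X $ z $ i = lift_chi z S $ i" for i
  proof (cases "i = z")
    case False
    have "X $ z $ i * X $ z $ i = X $ z $ i"
      using rank_one_nth[of i i] X_facts(3)[OF False] by linarith
    then have "X $ z $ i * (X $ z $ i - 1) = 0" by (simp add: right_diff_distrib)
    then show ?thesis using False by (auto simp: lift_chi_def S_def)
  qed (simp add: X_facts(2) lift_chi_def)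
  have "X $ i $ k = outer (lift_chi z S) $ i $ k" for i k
    using rank_one_nth[of i k] by (simp add: outer_def lift)
  then have "X = outer (lift_chi z S)" by (simp add: vec_eq_iff)
  moreover have "S \<subseteq> UNIV - {z}" by (auto simp: S_def)
  ultimately show ?thesis by blast
qed

lemma QQ_rank_eq_1_iff:
  assumes "X \<in> QQ z"
  shows "rank X = 1 \<longleftrightarrow> (\<exists>S \<subseteq> UNIV - {z}. X = outer (lift_chi z S))"
proof
  show "rank X = 1 \<Longrightarrow> \<exists>S \<subseteq> UNIV - {z}. X = outer (lift_chi z S)"
    using QQ_eq_outer_lift_chi_if_kernel[OF assms] rank_eq_1_iff_kernel[of X z] QQ_D(2)[OF assms]
    by simp
next
  assume "\<exists>S \<subseteq> UNIV - {z}. X = outer (lift_chi z S)"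
  then obtain S where X: "X = outer (lift_chi z S)" by blast
  have "\<forall>c. (X *v c) $ z = 0 \<longrightarrow> X *v c = 0"
    by (simp add: X outer_mult_vector lift_chi_nth_z)
  then show "rank X = 1"
    using rank_eq_1_iff_kernel[of X z] QQ_D(2)[OF assms] by simp
qed

section \<open>Rank-one points are vertices\<close>

definition sym_unit :: "'n \<Rightarrow> 'n \<Rightarrow> real^'n^'n" where
  "sym_unit i j = axis i (axis j 1) + axis j (axis i 1)"

lemma sym_unit_nth:
  "sym_unit i j $ a $ b = of_bool (a = i) * of_bool (b = j) + of_bool (a = j) * of_bool (b = i)"
  by (simp add: sym_unit_def axis_def)

lemma inner_sym_unit: "sym_unit i j \<bullet> Y = Y $ i $ j + Y $ j $ i"
  by (simp add: sym_unit_def inner_add_left inner_axis')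

lemma sym_unit_commute: "sym_unit i j = sym_unit j i"
  by (simp add: sym_unit_def add.commute)

lemma subspace_sym_mats: "subspace sym_mats"
  by (auto simp: subspace_def sym_mats_def transpose_def vec_eq_iff)

lemma sym_unit_in_sym_mats: "sym_unit i j \<in> sym_mats"
  by (simp add: sym_mats_def transpose_def vec_eq_iff sym_unit_nth add.commute)

lemma outer_in_sym_mats: "outer v \<in> sym_mats"
  by (simp add: sym_mats_def transpose_outer)

lemma sym_mats_subset_span:
  fixes T :: "(real^'n^'n) set"
  assumes "\<And>i j. sym_unit i j \<in> span T"
  shows "sym_mats \<subseteq> span T"
proof
  fix A :: "real^'n^'n" assume "A \<in> sym_mats"
  define symmetrize :: "real^'n^'n \<Rightarrow> real^'n^'n" where "symmetrize M = M + transpose M" for M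
  have "linear symmetrize"
    unfolding symmetrize_def by (intro linear_compose_add linear_ident linear_transpose)
  have "symmetrize b \<in> span T" if "b \<in> Basis" for b
  proof -
    obtain i j where "b = axis i (axis j 1)"
      using \<open>b \<in> Basis\<close> by (auto simp: Basis_vec_def)
    moreover have "transpose (axis i (axis j 1)) = (axis j (axis i 1) :: real^'n^'n)"
      by (auto simp: transpose_def axis_def vec_eq_iff)
    ultimately show ?thesis using assms by (simp add: symmetrize_def sym_unit_def)
  qed
  then have "span (symmetrize ` Basis) \<subseteq> span T"
    by (intro span_minimal) auto
  then have "symmetrize A \<in> span T"
    using span_linear_image[OF \<open>linear symmetrize\<close>, of Basis] by (auto simp: span_Basis)
  moreover have "A = (1/2) *\<^sub>R symmetrize A"
    using \<open>A \<in> sym_mats\<close> by (simp add: sym_mats_def symmetrize_def scaleR_2[symmetric])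
  ultimately show "A \<in> span T" by (metis span_scale)
qed

lemma outer_axis_diff:
  "outer (axis i 1 - s *\<^sub>R axis z 1)
    = (1/2) *\<^sub>R sym_unit i i - s *\<^sub>R sym_unit i z + (s\<^sup>2 / 2) *\<^sub>R sym_unit z z"
  by (simp add: vec_eq_iff outer_def axis_one_nth sym_unit_nth algebra_simps power2_eq_square)

lemma outer_axis_add_diff:
  "outer (axis i 1 + axis j 1 - s *\<^sub>R axis z 1)
    = (1/2) *\<^sub>R sym_unit i i + (1/2) *\<^sub>R sym_unit j j + sym_unit i j
      - s *\<^sub>R sym_unit i z - s *\<^sub>R sym_unit j z + (s\<^sup>2 / 2) *\<^sub>R sym_unit z z"
  by (simp add: vec_eq_iff outer_def axis_one_nth sym_unit_nth algebra_simps power2_eq_square)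

lemma normal_cone_antimono: "C \<subseteq> C' \<Longrightarrow> normal_cone E C' x \<subseteq> normal_cone E C x"
  by (auto simp: normal_cone_def)

lemma is_vertex_if_subset_span_normal_cone:
  assumes "x \<in> C" and "E \<subseteq> span (normal_cone E C x)"
  shows "is_vertex E C x"
proof -
  have "normal_cone E C x \<subseteq> E" by (auto simp: normal_cone_def)
  then have "span (normal_cone E C x) = span E"
    using assms(2) by (metis span_mono span_span subset_antisym)
  then show ?thesis
    using assms(1) unfolding is_vertex_def by (metis dim_span)
qed

lemma span_normal_cone_QQ_generators:
  fixes z :: "'n::finite" and S :: "'n set"
  defines "T \<equiv> span (normal_cone sym_mats (QQ z) (outer (lift_chi z S)))"
  shows "sym_unit z z \<in> T"
    and "i \<noteq> z \<Longrightarrow> sym_unit i i - sym_unit i z \<in> T"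
    and "w \<bullet> lift_chi z S = 0 \<Longrightarrow> outer w \<in> T"
proof -
  define X where "X = outer (lift_chi z S)"
  have normal: "A \<in> T" if "A \<in> sym_mats" "\<And>Y. Y \<in> QQ z \<Longrightarrow> A \<bullet> Y \<le> A \<bullet> X" for A
    using that by (auto simp: T_def X_def normal_cone_def intro: span_base)
  have X_QQ: "X \<in> QQ z" by (simp add: X_def outer_lift_chi_in_QQ)
  show "sym_unit z z \<in> T"
  proof (intro normal sym_unit_in_sym_mats)
    fix Y assume "Y \<in> QQ z"
    then show "sym_unit z z \<bullet> Y \<le> sym_unit z z \<bullet> X"
      using QQ_D(2)[OF \<open>Y \<in> QQ z\<close>] QQ_D(2)[OF X_QQ] by (simp add: inner_sym_unit)
  qed
  show "sym_unit i i - sym_unit i z \<in> T" if "i \<noteq> z"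
  proof (intro normal subspace_diff[OF subspace_sym_mats] sym_unit_in_sym_mats)
    fix Y assume "Y \<in> QQ z"
    then show "(sym_unit i i - sym_unit i z) \<bullet> Y \<le> (sym_unit i i - sym_unit i z) \<bullet> X"
      using QQ_D(3,4)[OF \<open>Y \<in> QQ z\<close>] QQ_D(3,4)[OF X_QQ] that
      by (simp add: inner_diff_left inner_sym_unit)
  qed
  show "outer w \<in> T" if "w \<bullet> lift_chi z S = 0"
  proof -
    have "- outer w \<in> T"
    proof (intro normal subspace_neg[OF subspace_sym_mats] outer_in_sym_mats)
      fix Y assume "Y \<in> QQ z"
      then have "0 \<le> w \<bullet> (Y *v w)" using QQ_D(1) psd_def by blast
      then show "- outer w \<bullet> Y \<le> - outer w \<bullet> X"
        using that by (simp add: X_def inner_outer outer_mult_vector inner_commute[of w])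
    qed
    then show ?thesis by (metis minus_minus span_neg T_def)
  qed
qed

lemma sym_mats_subset_span_normal_cone_QQ:
  fixes z :: "'n::finite"
  shows "sym_mats \<subseteq> span (normal_cone sym_mats (QQ z) (outer (lift_chi z S)))"
proof (rule sym_mats_subset_span)
  define v where "v = lift_chi z S"
  define T where "T = span (normal_cone sym_mats (QQ z) (outer v))"
  have T_zz: "sym_unit z z \<in> T"
    unfolding T_def v_def by (rule span_normal_cone_QQ_generators(1))
  have T_diag_row: "sym_unit i i - sym_unit i z \<in> T" if "i \<noteq> z" for i
    unfolding T_def v_def using that by (rule span_normal_cone_QQ_generators(2))
  have T_outer: "outer w \<in> T" if "w \<bullet> v = 0" for w
    using that unfolding T_def v_def by (rule span_normal_cone_QQ_generators(3))
  have v_z: "v $ z = 1" by (simp add: v_def lift_chi_nth_z)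
  have T_row: "sym_unit i z \<in> T" if "i \<noteq> z" for i
  proof -
    have "(1/2 - v $ i) *\<^sub>R sym_unit i z
        = outer (axis i 1 - v $ i *\<^sub>R axis z 1) - (1/2) *\<^sub>R (sym_unit i i - sym_unit i z)
          - ((v $ i)\<^sup>2 / 2) *\<^sub>R sym_unit z z"
      by (simp add: outer_axis_diff algebra_simps)
    moreover have "outer (axis i 1 - v $ i *\<^sub>R axis z 1) \<in> T"
      using v_z by (intro T_outer) (simp add: inner_diff_left inner_axis')
    ultimately have "(1/2 - v $ i) *\<^sub>R sym_unit i z \<in> T"
      using T_zz T_diag_row[OF that] by (simp add: T_def span_diff span_scale)
    \<comment> \<open>This is where the 0/1 entries of v are needed.\<close>
    moreover have "1/2 - v $ i \<noteq> 0" by (auto simp: v_def lift_chi_def)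
    ultimately show ?thesis
      by (metis T_def span_scale scaleR_scaleR left_inverse scaleR_one)
  qed
  have T_diag: "sym_unit i i \<in> T" if "i \<noteq> z" for i
    using T_diag_row[OF that] T_row[OF that] span_add unfolding T_def by fastforce
  have T_off_diag: "sym_unit i j \<in> T" if "i \<noteq> j" "i \<noteq> z" "j \<noteq> z" for i j
  proof -
    define s where "s = v $ i + v $ j"
    have "sym_unit i j = outer (axis i 1 + axis j 1 - s *\<^sub>R axis z 1)
        - (1/2) *\<^sub>R sym_unit i i - (1/2) *\<^sub>R sym_unit j j
        + s *\<^sub>R sym_unit i z + s *\<^sub>R sym_unit j z - (s\<^sup>2 / 2) *\<^sub>R sym_unit z z"
      by (simp add: outer_axis_add_diff algebra_simps)
    moreover have "outer (axis i 1 + axis j 1 - s *\<^sub>R axis z 1) \<in> T"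
      using v_z by (intro T_outer) (simp add: s_def inner_diff_left inner_add_left inner_axis')
    ultimately show ?thesis
      using T_row T_diag that T_zz by (simp add: T_def span_add span_diff span_scale)
  qed
  show "sym_unit i j \<in> T" for i j
    using T_zz T_row[of i] T_row[of j] T_diag T_off_diag[of i j] sym_unit_commute[of j z]
    by (cases "i = z"; cases "j = z"; cases "i = j") simp_all
qed

section \<open>Points of rank other than one are not vertices\<close>

lemma linear_coeff_eq_0_if_nonpos_near_0:
  fixes \<alpha> \<beta> \<epsilon> :: real
  assumes "\<epsilon> > 0" and nonpos: "\<And>t. \<bar>t\<bar> < \<epsilon> \<Longrightarrow> t * \<alpha> + t\<^sup>2 * \<beta> \<le> 0"
  shows "\<alpha> = 0"
proof (rule ccontr)
  assume "\<alpha> \<noteq> 0"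
  define s where "s = min (\<epsilon> / (2 * \<bar>\<alpha>\<bar>)) (1 / (2 * (\<bar>\<beta>\<bar> + 1)))"
  have "s > 0" using \<open>\<epsilon> > 0\<close> \<open>\<alpha> \<noteq> 0\<close> by (simp add: s_def)
  have "s * (2 * \<bar>\<alpha>\<bar>) \<le> \<epsilon>"
    using \<open>\<alpha> \<noteq> 0\<close> by (simp add: s_def min_le_iff_disj flip: pos_le_divide_eq)
  then have "\<bar>s * \<alpha>\<bar> < \<epsilon>" using \<open>s > 0\<close> \<open>\<epsilon> > 0\<close> by (simp add: abs_mult)
  have "s * (2 * (\<bar>\<beta>\<bar> + 1)) \<le> 1"
    by (simp add: s_def min_le_iff_disj flip: pos_le_divide_eq)
  then have "\<bar>s * \<beta>\<bar> < 1" using \<open>s > 0\<close> by (simp add: abs_mult algebra_simps)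
  then have "0 < s * \<alpha>\<^sup>2 * (1 + s * \<beta>)" using \<open>s > 0\<close> \<open>\<alpha> \<noteq> 0\<close> by (simp add: abs_less_iff)
  also have "\<dots> = (s * \<alpha>) * \<alpha> + (s * \<alpha>)\<^sup>2 * \<beta>" by (simp add: power2_eq_square algebra_simps)
  also have "\<dots> \<le> 0" using nonpos[OF \<open>\<bar>s * \<alpha>\<bar> < \<epsilon>\<close>] .
  finally show False by simp
qed

definition has_quadratic_arc :: "'a::real_vector set \<Rightarrow> 'a \<Rightarrow> 'a \<Rightarrow> bool" where
  "has_quadratic_arc C x d \<longleftrightarrow> (\<exists>w q \<epsilon>. \<epsilon> > 0 \<and> q \<ge> 0 \<and>
     (\<forall>t. \<bar>t\<bar> < \<epsilon> \<longrightarrow> (1 / (1 + t\<^sup>2 * q)) *\<^sub>R (x + t *\<^sub>R d + t\<^sup>2 *\<^sub>R w) \<in> C))"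

lemma has_quadratic_arc_mono:
  "has_quadratic_arc C x d \<Longrightarrow> C \<subseteq> C' \<Longrightarrow> has_quadratic_arc C' x d"
  unfolding has_quadratic_arc_def by blast

lemma has_quadratic_arc_linear_image:
  assumes "linear f" "has_quadratic_arc C x d"
  shows "has_quadratic_arc (f ` C) (f x) (f d)"
proof -
  obtain w q \<epsilon> where "\<epsilon> > 0" "q \<ge> 0"
    and arc: "\<And>t. \<bar>t\<bar> < \<epsilon> \<Longrightarrow> (1 / (1 + t\<^sup>2 * q)) *\<^sub>R (x + t *\<^sub>R d + t\<^sup>2 *\<^sub>R w) \<in> C"
    using assms(2) unfolding has_quadratic_arc_def by blast
  have "(1 / (1 + t\<^sup>2 * q)) *\<^sub>R (f x + t *\<^sub>R f d + t\<^sup>2 *\<^sub>R f w) \<in> f ` C" if "\<bar>t\<bar> < \<epsilon>" for t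
    using imageI[OF arc[OF that], of f] assms(1) by (simp add: linear_add linear_scale)
  then show ?thesis using \<open>\<epsilon> > 0\<close> \<open>q \<ge> 0\<close> unfolding has_quadratic_arc_def by blast
qed

lemma normal_cone_orthogonal_quadratic_arc:
  assumes "has_quadratic_arc C x d" and "c \<in> normal_cone E C x"
  shows "c \<bullet> d = 0"
proof -
  obtain w q \<epsilon> where "\<epsilon> > 0" "q \<ge> 0"
    and arc: "\<And>t. \<bar>t\<bar> < \<epsilon> \<Longrightarrow> (1 / (1 + t\<^sup>2 * q)) *\<^sub>R (x + t *\<^sub>R d + t\<^sup>2 *\<^sub>R w) \<in> C"
    using assms(1) unfolding has_quadratic_arc_def by blast
  have "t * (c \<bullet> d) + t\<^sup>2 * (c \<bullet> w - q * (c \<bullet> x)) \<le> 0" if "\<bar>t\<bar> < \<epsilon>" for t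
  proof -
    have "1 + t\<^sup>2 * q > 0" using \<open>q \<ge> 0\<close> by (simp add: add_pos_nonneg)
    moreover have "c \<bullet> ((1 / (1 + t\<^sup>2 * q)) *\<^sub>R (x + t *\<^sub>R d + t\<^sup>2 *\<^sub>R w)) \<le> c \<bullet> x"
      using assms(2) arc[OF that] by (auto simp: normal_cone_def)
    ultimately have "c \<bullet> (x + t *\<^sub>R d + t\<^sup>2 *\<^sub>R w) \<le> (1 + t\<^sup>2 * q) * (c \<bullet> x)"
      by (simp add: pos_divide_le_eq mult.commute)
    then show ?thesis by (simp add: inner_add_right algebra_simps)
  qed
  then show ?thesis using linear_coeff_eq_0_if_nonpos_near_0[OF \<open>\<epsilon> > 0\<close>] by blast
qed

lemma not_vertex_if_quadratic_arc:
  fixes E :: "'a::euclidean_space set"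
  assumes "subspace E" "d \<in> E" "d \<noteq> 0" "has_quadratic_arc C x d"
  shows "\<not> is_vertex E C x"
proof
  assume "is_vertex E C x"
  define H where "H = {c \<in> E. c \<bullet> d = 0}"
  have "subspace H"
    using \<open>subspace E\<close> by (auto simp: H_def subspace_def inner_add_left)
  moreover have "normal_cone E C x \<subseteq> H"
    using normal_cone_orthogonal_quadratic_arc[OF assms(4)] by (auto simp: H_def normal_cone_def)
  ultimately have "span (normal_cone E C x) \<subseteq> H" by (rule span_minimal[rotated])
  moreover have "H \<subseteq> span E" by (auto simp: H_def span_base)
  moreover have "d \<in> span E - H" using assms(2,3) by (simp add: H_def span_base)
  ultimately have "span (normal_cone E C x) \<subset> span E" by blast
  then have "dim (normal_cone E C x) < dim E" by (metis dim_psubset dim_span)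
  with \<open>is_vertex E C x\<close> show False by (simp add: is_vertex_def)
qed

lemma shear_scale_congruence_in_QQ:
  fixes X M :: "real^'n^'n"
  assumes X: "X \<in> QQ z" and c_z: "(X *v c) $ z = 0"
    and M_z: "M *v axis z 1 = axis z 1 + c"
    and M_j: "\<And>j. j \<noteq> z \<Longrightarrow> M *v axis j 1 = l j *\<^sub>R axis j 1"
    and diag: "\<And>j. j \<noteq> z \<Longrightarrow> l j * X $ j $ j = X $ j $ j + (X *v c) $ j"
  shows "(1 / (1 + c \<bullet> (X *v c))) *\<^sub>R (transpose M ** X ** M) \<in> QQ z"
    and "X \<in> QQ' z \<Longrightarrow> (\<And>j. j \<noteq> z \<Longrightarrow> l j \<ge> 0) \<Longrightarrow>
      (1 / (1 + c \<bullet> (X *v c))) *\<^sub>R (transpose M ** X ** M) \<in> QQ' z"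
proof -
  note X_facts = QQ_D[OF X]
  have sym: "transpose X = X" using X_facts(1) by (simp add: psd_def)
  have c_col: "c \<bullet> (X *v axis j 1) = (X *v c) $ j" for j
    using symmetric_inner_matrix_commute[OF sym, of c "axis j 1"] by (simp add: inner_axis')
  define W where "W = transpose M ** X ** M"
  define \<rho> where "\<rho> = 1 + c \<bullet> (X *v c)"
  have "\<rho> > 0" using X_facts(1) by (simp add: \<rho>_def psd_def add_pos_nonneg)
  have W_jk: "W $ j $ k = l j * l k * X $ j $ k" if "j \<noteq> z" "k \<noteq> z" for j k
    by (simp add: W_def congruence_nth M_j that algebra_simps inner_axis_matrix_axis)
  have "psd ((1 / \<rho>) *\<^sub>R W)"
    using \<open>\<rho> > 0\<close> by (simp add: W_def psd_scaleR psd_congruence X_facts(1))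
  moreover have "W $ z $ z = \<rho>"
    using X_facts(2) c_z
    by (simp add: W_def \<rho>_def congruence_nth M_z algebra_simps inner_axis' inner_axis_matrix_axis
        c_col matrix_vector_axis_nth)
  moreover have "W $ i $ i = W $ z $ i" if "i \<noteq> z" for i
  proof -
    have "W $ z $ i = l i * (X $ z $ i + (X *v c) $ i)"
      by (simp add: W_def congruence_nth M_z M_j that algebra_simps inner_axis_matrix_axis c_col)
    then show ?thesis using diag[OF that] X_facts(3)[OF that] by (simp add: W_jk[OF that that])
  qed
  ultimately show in_QQ: "(1 / \<rho>) *\<^sub>R W \<in> QQ z"
    using \<open>\<rho> > 0\<close> by (simp add: QQ_def)
  assume "X \<in> QQ' z" and "\<And>j. j \<noteq> z \<Longrightarrow> l j \<ge> 0"
  then have "0 \<le> W $ i $ j" if "i \<noteq> z" "j \<noteq> z" for i j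
    using that by (simp add: W_jk[OF that] QQ'_def)
  then show "(1 / \<rho>) *\<^sub>R W \<in> QQ' z"
    using in_QQ \<open>\<rho> > 0\<close> by (simp add: QQ'_def)
qed

lemma exists_pos_bound_one_plus_mult_nonneg:
  fixes a :: "'i::finite \<Rightarrow> real"
  obtains \<epsilon> where "\<epsilon> > 0" "\<And>t j. \<bar>t\<bar> < \<epsilon> \<Longrightarrow> 0 \<le> 1 + t * a j"
proof
  define A where "A = (\<Sum>j\<in>UNIV. \<bar>a j\<bar>)"
  have "A \<ge> 0" by (simp add: A_def sum_nonneg)
  then show "1 / (1 + A) > 0" by (simp add: add_pos_nonneg)
  fix t j assume "\<bar>t\<bar> < 1 / (1 + A)"
  have "\<bar>a j\<bar> \<le> A" unfolding A_def by (rule member_le_sum) auto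
  then have "\<bar>t\<bar> * \<bar>a j\<bar> \<le> \<bar>t\<bar> * A" by (simp add: mult_left_mono)
  moreover have "\<bar>t\<bar> * (1 + A) < 1"
    using \<open>\<bar>t\<bar> < 1 / (1 + A)\<close> \<open>A \<ge> 0\<close> by (simp add: pos_less_divide_eq)
  ultimately have "\<bar>t * a j\<bar> < 1" by (simp add: abs_mult algebra_simps)
  then show "0 \<le> 1 + t * a j" by linarith
qed

lemma tangent_congruence_nth:
  "(transpose K ** X + X ** K) $ i $ j
    = (K *v axis i 1) \<bullet> (X *v axis j 1) + axis i 1 \<bullet> ((X::real^'n^'n) *v (K *v axis j 1))"
  by (simp add: matrix_vector_mult_add_rdistrib matrix_vector_mul_assoc[symmetric]
      inner_add_right inner_transpose_matrix_vector del: transpose_matrix_vector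
      flip: inner_axis_matrix_axis)

lemma QQ_shear_scale_arc:
  fixes X K :: "real^'n^'n"
  assumes X: "X \<in> QQ z" and c_z: "(X *v c) $ z = 0"
    and K_z: "K *v axis z 1 = c"
    and K_j: "\<And>j. j \<noteq> z \<Longrightarrow> K *v axis j 1 = a j *\<^sub>R axis j 1"
    and a_diag: "\<And>j. a j * X $ j $ j = (X *v c) $ j"
  shows "has_quadratic_arc (QQ z) X (transpose K ** X + X ** K)"
    and "X \<in> QQ' z \<Longrightarrow> has_quadratic_arc (QQ' z) X (transpose K ** X + X ** K)"
proof -
  define D where "D = transpose K ** X + X ** K"
  define W where "W = transpose K ** X ** K"
  define q where "q = c \<bullet> (X *v c)"
  have "q \<ge> 0" using QQ_D(1)[OF X] by (simp add: q_def psd_def)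
  define Y where "Y t = (1 / (1 + t\<^sup>2 * q)) *\<^sub>R (X + t *\<^sub>R D + t\<^sup>2 *\<^sub>R W)" for t
  have Y_eq: "Y t = (1 / (1 + (t *\<^sub>R c) \<bullet> (X *v (t *\<^sub>R c))))
      *\<^sub>R (transpose (mat 1 + t *\<^sub>R K) ** X ** (mat 1 + t *\<^sub>R K))" for t
    by (simp add: Y_def congruence_identity_plus D_def W_def q_def matrix_vector_mult_scaleR
        power2_eq_square)
  have M_z: "(mat 1 + t *\<^sub>R K) *v axis z 1 = axis z 1 + t *\<^sub>R c" for t
    by (simp add: matrix_vector_mult_add_rdistrib scaleR_matrix_vector_assoc[symmetric] K_z)
  have M_j: "(mat 1 + t *\<^sub>R K) *v axis j 1 = (1 + t * a j) *\<^sub>R axis j 1" if "j \<noteq> z" for t j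
    by (simp add: matrix_vector_mult_add_rdistrib scaleR_matrix_vector_assoc[symmetric]
        K_j[OF that] scaleR_add_left)
  have diag: "(1 + t * a j) * X $ j $ j = X $ j $ j + (X *v (t *\<^sub>R c)) $ j" for t j
    using a_diag[of j] by (simp add: matrix_vector_mult_scaleR algebra_simps)
  have "Y t \<in> QQ z" for t
    unfolding Y_eq
    by (rule shear_scale_congruence_in_QQ(1)[of X z "t *\<^sub>R c" _ "\<lambda>j. 1 + t * a j"])
      (use X c_z M_z M_j diag in \<open>simp_all add: matrix_vector_mult_scaleR\<close>)
  then show "has_quadratic_arc (QQ z) X (transpose K ** X + X ** K)"
    using \<open>q \<ge> 0\<close> unfolding has_quadratic_arc_def Y_def D_def
    by (intro exI[of _ W] exI[of _ q] exI[of _ 1]) simp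
  assume "X \<in> QQ' z"
  obtain \<epsilon> where "\<epsilon> > 0" and pos: "\<And>t j. \<bar>t\<bar> < \<epsilon> \<Longrightarrow> 0 \<le> 1 + t * a j"
    using exists_pos_bound_one_plus_mult_nonneg by blast
  have "Y t \<in> QQ' z" if "\<bar>t\<bar> < \<epsilon>" for t
    unfolding Y_eq
    by (rule shear_scale_congruence_in_QQ(2)[of X z "t *\<^sub>R c" _ "\<lambda>j. 1 + t * a j"])
      (use X c_z M_z M_j diag \<open>X \<in> QQ' z\<close> pos[OF that] in
        \<open>simp_all add: matrix_vector_mult_scaleR\<close>)
  then show "has_quadratic_arc (QQ' z) X (transpose K ** X + X ** K)"
    using \<open>\<epsilon> > 0\<close> \<open>q \<ge> 0\<close> unfolding has_quadratic_arc_def Y_def D_def by blast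
qed

lemma QQ_quadratic_arc:
  fixes X :: "real^'n^'n"
  assumes X: "X \<in> QQ z" and c_z: "(X *v c) $ z = 0" and c_nz: "X *v c \<noteq> 0"
  obtains D where "D \<in> sym_mats" "D \<noteq> 0" "has_quadratic_arc (QQ z) X D"
    and "X \<in> QQ' z \<Longrightarrow> has_quadratic_arc (QQ' z) X D"
proof -
  note X_facts = QQ_D[OF X]
  have sym: "transpose X = X" using X_facts(1) by (simp add: psd_def)
  define y where "y = X *v c"
  define a where "a j = y $ j / X $ j $ j" for j
  \<comment> \<open>If X_jj = 0 then row j of X vanishes, so y_j = 0 and the junk value a j = 0 is harmless.\<close>
  have a_diag: "a j * X $ j $ j = y $ j" for j
  proof (cases "X $ j $ j = 0")
    case True
    then have "X $ j = 0"
      using psd_diag_eq_0_imp_row_eq_0[OF X_facts(1)] by (simp add: vec_eq_iff)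
    then show ?thesis using True by (simp add: y_def matrix_vector_mul_component)
  qed (simp add: a_def)
  define K :: "real^'n^'n" where "K = (\<chi> i k. if k = z then c $ i else if i = k then a i else 0)"
  have K_z: "K *v axis z 1 = c" and K_j: "j \<noteq> z \<Longrightarrow> K *v axis j 1 = a j *\<^sub>R axis j 1" for j
    by (auto simp: vec_eq_iff matrix_vector_axis_nth K_def axis_one_nth)
  define D where "D = transpose K ** X + X ** K"
  have "D \<in> sym_mats"
    by (simp add: sym_mats_def D_def transpose_add matrix_transpose_mul sym add.commute)
  moreover have "D \<noteq> 0"
  proof -
    obtain j where "y $ j \<noteq> 0" using c_nz by (auto simp: y_def vec_eq_iff)
    then have "j \<noteq> z" using c_z by (auto simp: y_def)
    have "D $ z $ j = (K *v axis z 1) \<bullet> (X *v axis j 1) + axis z 1 \<bullet> (X *v (K *v axis j 1))"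
      by (simp only: D_def tangent_congruence_nth)
    also have "\<dots> = 2 * y $ j"
      using symmetric_inner_matrix_commute[OF sym, of c "axis j 1"] a_diag[of j]
        X_facts(3)[OF \<open>j \<noteq> z\<close>]
      by (simp add: K_z K_j[OF \<open>j \<noteq> z\<close>] matrix_vector_mult_scaleR inner_axis_matrix_axis
          inner_axis' y_def mult.commute matrix_vector_axis_nth)
    finally have "D $ z $ j = 2 * y $ j" .
    then show ?thesis using \<open>y $ j \<noteq> 0\<close> by auto
  qed
  moreover have "has_quadratic_arc (QQ z) X D" "X \<in> QQ' z \<Longrightarrow> has_quadratic_arc (QQ' z) X D"
    unfolding D_def
    by (rule QQ_shear_scale_arc[of X z c K a]; use X c_z K_z K_j a_diag in \<open>simp add: y_def\<close>)+
  ultimately show ?thesis using that by blast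
qed

lemma QQ_quadratic_arc_if_rank_ne_1:
  assumes "X \<in> QQ z" "rank X \<noteq> 1"
  obtains D where "D \<in> sym_mats" "D \<noteq> 0" "has_quadratic_arc (QQ z) X D"
    and "X \<in> QQ' z \<Longrightarrow> has_quadratic_arc (QQ' z) X D"
proof -
  have "X $ z $ z \<noteq> 0" using QQ_D(2)[OF assms(1)] by simp
  then obtain c where "(X *v c) $ z = 0" "X *v c \<noteq> 0"
    using assms(2) rank_eq_1_iff_kernel by blast
  then show ?thesis using QQ_quadratic_arc[OF assms(1)] that by blast
qed

text \<open>Congruence by the involution e_j \<mapsto> e_z - e_j (j \<noteq> z), i.e. complementing x_j \<mapsto> 1 - x_j
  in the lifted coordinates; it exchanges the inequalities defining Q' and Q''.\<close>

definition switch_mat :: "'n \<Rightarrow> real^'n^'n" where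
  "switch_mat z = (\<chi> i k. if k = z then of_bool (i = z) else of_bool (i = z) - of_bool (i = k))"

definition switch :: "'n \<Rightarrow> real^'n^'n \<Rightarrow> real^'n^'n" where
  "switch z A = transpose (switch_mat z) ** A ** switch_mat z"

lemma switch_mat_axis:
  "switch_mat z *v axis k 1 = (if k = z then axis z 1 else axis z 1 - axis k 1)"
  by (simp add: vec_eq_iff matrix_vector_axis_nth switch_mat_def axis_one_nth)

lemma switch_mat_squared: "switch_mat z ** switch_mat z = mat 1"
  by (rule matrix_eq_if_columns_eq)
    (simp add: matrix_vector_mul_assoc[symmetric] switch_mat_axis matrix_vector_mult_diff_distrib)

lemma switch_switch: "switch z (switch z A) = A"
proof -
  have "switch z (switch z A)
      = transpose (switch_mat z ** switch_mat z) ** A ** (switch_mat z ** switch_mat z)"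
    by (simp add: switch_def matrix_transpose_mul matrix_mul_assoc)
  then show ?thesis by (simp add: switch_mat_squared)
qed

lemma linear_switch: "linear (switch z)"
  by (simp add: linear_iff switch_def matrix_add_ldistrib matrix_add_rdistrib matrix_scalar_ac
      scalar_matrix_assoc[symmetric])

lemma switch_in_sym_mats: "A \<in> sym_mats \<Longrightarrow> switch z A \<in> sym_mats"
  by (simp add: sym_mats_def switch_def matrix_transpose_mul matrix_mul_assoc)

lemma rank_switch: "rank (switch z A) = rank A"
proof (rule antisym)
  show le: "rank (switch z B) \<le> rank B" for B
    unfolding switch_def by (meson order_trans rank_mul_le_left rank_mul_le_right)
  show "rank A \<le> rank (switch z A)"
    using le[of "switch z A"] by (simp add: switch_switch)
qed

lemma switch_nth:
  "switch z A $ i $ k = (switch_mat z *v axis i 1) \<bullet> (A *v (switch_mat z *v axis k 1))"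
  by (simp add: switch_def congruence_nth)

lemma switch_in_QQ:
  assumes "X \<in> QQ z"
  shows "switch z X \<in> QQ z"
proof -
  note X_facts = QQ_D[OF assms]
  have "switch z X $ i $ i = switch z X $ z $ i" if "i \<noteq> z" for i
    using that X_facts(3)[OF that] X_facts(4)[of i z]
    by (simp add: switch_nth switch_mat_axis matrix_vector_mult_diff_distrib inner_diff_left
        inner_diff_right inner_axis_matrix_axis)
  moreover have "psd (switch z X)"
    unfolding switch_def by (rule psd_congruence[OF X_facts(1)])
  ultimately show ?thesis
    using X_facts(2) by (simp add: QQ_def switch_nth switch_mat_axis inner_axis_matrix_axis)
qed

lemma switch_in_QQ'_if_QQ'':
  assumes "X \<in> QQ'' z"
  shows "switch z X \<in> QQ' z"
proof -
  have X: "X \<in> QQ z" using assms by (simp add: QQ''_def)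
  have "0 \<le> switch z X $ i $ j" if "i \<noteq> z" "j \<noteq> z" for i j
  proof (cases "i = j")
    case True
    then show ?thesis using QQ_D(1)[OF X] that by (simp add: switch_nth switch_mat_axis psd_def)
  next
    case False
    then show ?thesis using assms that by (simp add: QQ''_def switch_nth switch_mat_axis)
  qed
  then show ?thesis using switch_in_QQ[OF X] by (simp add: QQ'_def)
qed

lemma switch_in_QQ''_if_QQ':
  assumes "X \<in> QQ' z"
  shows "switch z X \<in> QQ'' z"
proof -
  have X: "X \<in> QQ z" using assms by (simp add: QQ'_def)
  have "(axis z 1 - axis i 1) \<bullet> (switch z X *v (axis z 1 - axis j 1)) = X $ i $ j"
    if "i \<noteq> z" "j \<noteq> z" for i j
    using that switch_nth[of z "switch z X" i j] by (simp add: switch_switch switch_mat_axis)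
  then show ?thesis using assms switch_in_QQ[OF X] by (simp add: QQ'_def QQ''_def)
qed

lemma not_vertex_if_rank_ne_1:
  assumes C: "C \<in> {QQ z, QQ' z, QQ'' z}" and "X \<in> C" "rank X \<noteq> 1"
  shows "\<not> is_vertex sym_mats C X"
proof -
  consider "C = QQ z \<or> C = QQ' z" | "C = QQ'' z" using C by blast
  then show ?thesis
  proof cases
    case 1
    then have "X \<in> QQ z" using \<open>X \<in> C\<close> by (auto simp: QQ'_def)
    obtain D where D: "D \<in> sym_mats" "D \<noteq> 0" "has_quadratic_arc (QQ z) X D"
      "X \<in> QQ' z \<Longrightarrow> has_quadratic_arc (QQ' z) X D"
      using QQ_quadratic_arc_if_rank_ne_1[OF \<open>X \<in> QQ z\<close> \<open>rank X \<noteq> 1\<close>] by blast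
    then have "has_quadratic_arc C X D" using 1 \<open>X \<in> C\<close> by auto
    then show ?thesis by (rule not_vertex_if_quadratic_arc[OF subspace_sym_mats D(1,2)])
  next
    case 2
    define Y where "Y = switch z X"
    have "Y \<in> QQ' z" using \<open>X \<in> C\<close> 2 by (simp add: Y_def switch_in_QQ'_if_QQ'')
    then have "Y \<in> QQ z" by (simp add: QQ'_def)
    have "rank Y \<noteq> 1" using \<open>rank X \<noteq> 1\<close> by (simp add: Y_def rank_switch)
    obtain D where D: "D \<in> sym_mats" "D \<noteq> 0" "has_quadratic_arc (QQ z) Y D"
      "Y \<in> QQ' z \<Longrightarrow> has_quadratic_arc (QQ' z) Y D"
      using QQ_quadratic_arc_if_rank_ne_1[OF \<open>Y \<in> QQ z\<close> \<open>rank Y \<noteq> 1\<close>] by blast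
    have "has_quadratic_arc (switch z ` QQ' z) (switch z Y) (switch z D)"
      by (rule has_quadratic_arc_linear_image[OF linear_switch D(4)[OF \<open>Y \<in> QQ' z\<close>]])
    moreover have "switch z Y = X" by (simp add: Y_def switch_switch)
    moreover have "switch z ` QQ' z \<subseteq> C" using 2 switch_in_QQ''_if_QQ' by blast
    ultimately have "has_quadratic_arc C X (switch z D)" by (metis has_quadratic_arc_mono)
    moreover have "switch z D \<noteq> 0"
    proof
      assume "switch z D = 0"
      then have "D = switch z 0" using switch_switch[of z D] by simp
      then show False using linear_0[OF linear_switch, of z] D(2) by simp
    qed
    ultimately show ?thesis
      by (intro not_vertex_if_quadratic_arc[OF subspace_sym_mats switch_in_sym_mats[OF D(1)]])
  qed
qed

theorem corollary3p3:
  fixes z :: "'n::finite" and C :: "(real^'n^'n) set"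
  assumes "C \<in> {QQ z, QQ' z, QQ'' z}"
  shows "(\<forall>X\<in>C. is_vertex sym_mats C X \<longleftrightarrow> rank X = 1) \<and>
         {X. is_vertex sym_mats C X} = {outer (lift_chi z S) | S. S \<subseteq> UNIV - {z}}"
proof -
  have C_QQ: "C \<subseteq> QQ z" using assms by (auto simp: QQ'_def QQ''_def)
  have lift_C: "outer (lift_chi z S) \<in> C" for S
    using assms outer_lift_chi_in_QQ outer_lift_chi_in_QQ' outer_lift_chi_in_QQ'' by blast
  have vertex_lift: "is_vertex sym_mats C (outer (lift_chi z S))" for S
    by (rule is_vertex_if_subset_span_normal_cone[OF lift_C subset_trans[OF
          sym_mats_subset_span_normal_cone_QQ span_mono[OF normal_cone_antimono[OF C_QQ]]]])
  have vertex_iff: "is_vertex sym_mats C X \<longleftrightarrow> (\<exists>S \<subseteq> UNIV - {z}. X = outer (lift_chi z S))"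
    and rank_iff: "is_vertex sym_mats C X \<longleftrightarrow> rank X = 1" if "X \<in> C" for X
    using QQ_rank_eq_1_iff[of X z] C_QQ that vertex_lift not_vertex_if_rank_ne_1[OF assms that]
    by auto
  have "{X. is_vertex sym_mats C X} = {X \<in> C. \<exists>S \<subseteq> UNIV - {z}. X = outer (lift_chi z S)}"
    using vertex_iff by (auto simp: is_vertex_def)
  also have "\<dots> = {outer (lift_chi z S) | S. S \<subseteq> UNIV - {z}}" using lift_C by auto
  finally show ?thesis using rank_iff by blast
qed

end
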